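(* Let $\Phi$ be an irreducible root system of rank $n$. There exists a subset $H_\Phi\subseteq[n]$ such that $$\mathcal H_\Phi=\{w(\breve\omega_k)^\perp\mid w\in W,\ k\in H_\Phi\}.$$ Furthermore, $H_\Phi$ is contained in the set of $h\in[n]$ such that the standard parabolic subsystem of $\Phi$ generated by $\Pi\setminus\{\alpha_h\}$ is irreducible.
   Context: $\Phi$ is a finite irreducible crystallographic root system in $E=\operatorname{span}_{\mathbb R}\Phi$ with inner product $(-,-)$, basis $\Pi=\{\alpha_1,\dots,\alpha_n\}$, Weyl group $W$. The fundamental coweights $\breve\omega_1,\dots,\breve\omega_n$ are the vectors of $E$ with $(\alpha_j,\breve\omega_i)=\delta_{ij}$; $W$ acts on them as vectors of $E$. $\mathcal P_\Phi=\operatorname{conv}(\Phi)$ and $\mathcal H_\Phi$ is the set of linear hyperplanes $\operatorname{span}_{\mathbb R}F$, $F$ a face of $\mathcal P_\Phi$ of dimension $n-2$. The standard parabolic subsystem generated by $\Gamma\subseteq\Pi$ is $\Phi\cap\operatorname{span}\Gamma$. *)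

theory Defs
  imports "HOL-Analysis.Analysis"
begin

definition refl :: "'a::euclidean_space \<Rightarrow> 'a \<Rightarrow> 'a" where
  "refl a x = x - (2 * (x \<bullet> a) / (a \<bullet> a)) *\<^sub>R a"

definition root_system :: "'a::euclidean_space set \<Rightarrow> bool" where
  "root_system \<Phi> \<longleftrightarrow> finite \<Phi> \<and> 0 \<notin> \<Phi> \<and> span \<Phi> = UNIV
     \<and> (\<forall>a\<in>\<Phi>. \<forall>b\<in>\<Phi>. refl a b \<in> \<Phi>)
     \<and> (\<forall>a\<in>\<Phi>. \<forall>b\<in>\<Phi>. 2 * (b \<bullet> a) / (a \<bullet> a) \<in> \<int>)
     \<and> (\<forall>a\<in>\<Phi>. \<forall>c. c *\<^sub>R a \<in> \<Phi> \<longrightarrow> c = 1 \<or> c = -1)"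

text \<open>Irreducible: no partition into two nonempty mutually orthogonal subsets
  (the empty system is irreducible vacuously).\<close>
definition irreducible_rs :: "'a::euclidean_space set \<Rightarrow> bool" where
  "irreducible_rs \<Phi> \<longleftrightarrow> (\<forall>A B. A \<union> B = \<Phi> \<and> A \<inter> B = {} \<and>
       (\<forall>a\<in>A. \<forall>b\<in>B. a \<bullet> b = 0) \<longrightarrow> A = {} \<or> B = {})"

definition is_base :: "'a::euclidean_space set \<Rightarrow> (nat \<Rightarrow> 'a) \<Rightarrow> nat \<Rightarrow> bool" where
  "is_base \<Phi> \<alpha> n \<longleftrightarrow> \<alpha> ` {1..n} \<subseteq> \<Phi> \<and> inj_on \<alpha> {1..n}
     \<and> independent (\<alpha> ` {1..n})
     \<and> (\<forall>b\<in>\<Phi>. \<exists>c :: nat \<Rightarrow> int. b = (\<Sum>i=1..n. of_int (c i) *\<^sub>R \<alpha> i)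
            \<and> ((\<forall>i\<in>{1..n}. c i \<ge> 0) \<or> (\<forall>i\<in>{1..n}. c i \<le> 0)))"

inductive_set weyl :: "'a::euclidean_space set \<Rightarrow> ('a \<Rightarrow> 'a) set" for \<Phi> where
  weyl_id: "id \<in> weyl \<Phi>"
| weyl_step: "a \<in> \<Phi> \<Longrightarrow> w \<in> weyl \<Phi> \<Longrightarrow> refl a \<circ> w \<in> weyl \<Phi>"

definition coweight :: "(nat \<Rightarrow> 'a::euclidean_space) \<Rightarrow> nat \<Rightarrow> nat \<Rightarrow> 'a" where
  "coweight \<alpha> n k = (THE v. \<forall>j\<in>{1..n}. \<alpha> j \<bullet> v = (if j = k then 1 else 0))"

definition face_hyperplanes :: "'a::euclidean_space set \<Rightarrow> 'a set set" where
  "face_hyperplanes \<Phi> = {span F | F. F face_of convex hull \<Phi> \<and> aff_dim F = int DIM('a) - 2}"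

definition orth :: "'a::euclidean_space \<Rightarrow> 'a set" where
  "orth v = {x. x \<bullet> v = 0}"

end

theory Submission
  imports Defs
begin

text \<open>
  A face hyperplane \<open>span F\<close> is spanned by the roots it contains. Moving its normal by \<open>W\<close>
  into the dominant chamber gives a dominant vector \<open>u\<close>; since every root has coefficients of
  one sign with respect to \<open>\<Pi>\<close>, the roots orthogonal to \<open>u\<close> lie in the span of the simple roots
  orthogonal to \<open>u\<close>, so \<open>n - 1\<close> simple roots are orthogonal to \<open>u\<close> and \<open>u\<^sup>\<perp>\<close> is a fundamental
  coweight hyperplane. Taking for \<open>H\<^sub>\<Phi>\<close> the coweights whose hyperplanes are face hyperplanes, the
  \<open>W\<close>-invariance of the set of face hyperplanes gives the equality.

  If the roots in a face hyperplane \<open>span F\<close> split into orthogonal parts \<open>A\<close>, \<open>B\<close>, pick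
  \<open>a \<in> A \<inter> F\<close>, \<open>b \<in> B \<inter> F\<close> and (by irreducibility of \<open>\<Phi>\<close>) a root \<open>r\<close> at an obtuse angle with
  both. Then \<open>a + r\<close> and \<open>a + b + r\<close> are roots, and the midpoint of \<open>a + b + r\<close> and \<open>-r\<close> is that
  of \<open>a\<close> and \<open>b\<close>, which lies in \<open>F\<close>; so \<open>-r \<in> F\<close>, whence \<open>r\<close> lies in \<open>A \<union> B\<close>, impossible.
\<close>

section \<open>Reflections and the Weyl group\<close>

lemma refl_linear: "linear (refl a)"
  unfolding refl_def
  by (intro linearI) (auto simp: inner_add_left algebra_simps add_divide_distrib)

lemma refl_inner_refl: "refl a x \<bullet> refl a y = x \<bullet> y"
proof (cases "a = 0")
  case True
  then show ?thesis by (simp add: refl_def)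
next
  case False
  then have "a \<bullet> a \<noteq> 0" by simp
  then show ?thesis unfolding refl_def
    by (simp add: inner_diff_left inner_diff_right algebra_simps) (simp add: field_simps inner_commute)
qed

lemma refl_involution: "refl a (refl a x) = x"
proof (cases "a = 0")
  case True
  then show ?thesis by (simp add: refl_def)
next
  case False
  then have "a \<bullet> a \<noteq> 0" by simp
  then have "refl a x \<bullet> a = - (x \<bullet> a)" unfolding refl_def by (simp add: inner_diff_left)
  then show ?thesis unfolding refl_def[of a "refl a x"] by (simp add: refl_def)
qed

lemma weyl_linear: "w \<in> weyl \<Phi> \<Longrightarrow> linear w"
proof (induction rule: weyl.induct)
  case weyl_id
  then show ?case using linear_id by (simp add: id_def)
next
  case (weyl_step a w)
  then show ?case using linear_compose[OF weyl_step(3) refl_linear] by (simp add: o_def)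
qed

lemma weyl_inner: "w \<in> weyl \<Phi> \<Longrightarrow> w x \<bullet> w y = x \<bullet> y"
  by (induction arbitrary: x y rule: weyl.induct) (auto simp: refl_inner_refl)

lemma weyl_inj:
  assumes "w \<in> weyl \<Phi>"
  shows "inj w"
proof (rule injI)
  fix x y assume "w x = w y"
  then have "w (x - y) = 0" using weyl_linear[OF assms] by (simp add: linear_diff)
  then have "(x - y) \<bullet> (x - y) = 0" using weyl_inner[OF assms, of "x - y" "x - y"] by simp
  then show "x = y" by simp
qed

lemma weyl_surj: "w \<in> weyl \<Phi> \<Longrightarrow> surj w"
  using linear_inj_imp_surj weyl_linear weyl_inj by blast

lemma weyl_comp: "w1 \<in> weyl \<Phi> \<Longrightarrow> w2 \<in> weyl \<Phi> \<Longrightarrow> w1 \<circ> w2 \<in> weyl \<Phi>"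
  by (induction rule: weyl.induct) (auto simp: o_assoc[symmetric] intro: weyl.weyl_step)

lemma weyl_refl: "a \<in> \<Phi> \<Longrightarrow> refl a \<in> weyl \<Phi>"
  using weyl.weyl_step[OF _ weyl.weyl_id] by fastforce

lemma weyl_inverse: "w \<in> weyl \<Phi> \<Longrightarrow> \<exists>w'\<in>weyl \<Phi>. \<forall>x. w' (w x) = x"
proof (induction rule: weyl.induct)
  case weyl_id
  then show ?case using weyl.weyl_id[of \<Phi>] by (intro bexI[of _ id]) auto
next
  case (weyl_step a w)
  then obtain w' where "w' \<in> weyl \<Phi>" "\<forall>x. w' (w x) = x" by blast
  then show ?case using weyl_comp[OF \<open>w' \<in> weyl \<Phi>\<close> weyl_refl[OF weyl_step(1)]]
    by (intro bexI[of _ "w' \<circ> refl a"]) (auto simp: refl_involution)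
qed

lemma weyl_image_orth:
  assumes "w \<in> weyl \<Phi>"
  shows "w ` orth x = orth (w x)"
proof
  show "w ` orth x \<subseteq> orth (w x)" using weyl_inner[OF assms] by (auto simp: orth_def)
  show "orth (w x) \<subseteq> w ` orth x"
  proof
    fix y assume y: "y \<in> orth (w x)"
    obtain z where z: "y = w z" using weyl_surj[OF assms] by (metis surjD)
    then have "z \<bullet> x = 0" using y weyl_inner[OF assms] by (auto simp: orth_def)
    then show "y \<in> w ` orth x" using z by (auto simp: orth_def)
  qed
qed

section \<open>Root systems\<close>

lemma root_system_nonzero: "root_system \<Phi> \<Longrightarrow> a \<in> \<Phi> \<Longrightarrow> a \<noteq> 0"
  by (auto simp: root_system_def)

lemma root_system_refl: "root_system \<Phi> \<Longrightarrow> a \<in> \<Phi> \<Longrightarrow> b \<in> \<Phi> \<Longrightarrow> refl a b \<in> \<Phi>"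
  by (simp add: root_system_def)

lemma root_system_cartan_integer:
  "root_system \<Phi> \<Longrightarrow> a \<in> \<Phi> \<Longrightarrow> b \<in> \<Phi> \<Longrightarrow> 2 * (b \<bullet> a) / (a \<bullet> a) \<in> \<int>"
  by (simp add: root_system_def)

lemma weyl_root:
  assumes "root_system \<Phi>" "w \<in> weyl \<Phi>" "x \<in> \<Phi>"
  shows "w x \<in> \<Phi>"
  using assms(2,3) by (induction arbitrary: x rule: weyl.induct) (use assms(1) in \<open>auto simp: root_system_def\<close>)

lemma weyl_image_roots:
  assumes "root_system \<Phi>" "w \<in> weyl \<Phi>"
  shows "w ` \<Phi> = \<Phi>"
proof (rule endo_inj_surj)
  show "finite \<Phi>" using assms(1) by (simp add: root_system_def)
  show "w ` \<Phi> \<subseteq> \<Phi>" using weyl_root[OF assms] by blast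
  show "inj_on w \<Phi>" using weyl_inj[OF assms(2)] by (rule inj_on_subset) simp
qed

lemma weyl_image_face_hyperplane:
  assumes rs: "root_system \<Phi>" and w: "w \<in> weyl \<Phi>" and S: "S \<in> face_hyperplanes \<Phi>"
  shows "w ` S \<in> face_hyperplanes \<Phi>"
proof -
  obtain F where F: "F face_of convex hull \<Phi>" "aff_dim F = int DIM('a) - 2" "S = span F"
    using S by (auto simp: face_hyperplanes_def)
  have lin: "linear w" and inj: "inj w" using w weyl_linear weyl_inj by auto
  have "w ` (convex hull \<Phi>) = convex hull \<Phi>"
    using convex_hull_linear_image[OF lin] weyl_image_roots[OF rs w] by simp
  then have "w ` F face_of convex hull \<Phi>" using face_of_linear_image[OF lin inj] F(1) by metis
  moreover have "aff_dim (w ` F) = int DIM('a) - 2"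
    using aff_dim_injective_linear_image[OF lin inj] F(2) by simp
  moreover have "w ` S = span (w ` F)" using span_linear_image[OF lin] F(3) by simp
  ultimately show ?thesis unfolding face_hyperplanes_def by blast
qed

lemma root_system_uminus:
  assumes "root_system \<Phi>" "a \<in> \<Phi>"
  shows "- a \<in> \<Phi>"
proof -
  have "a \<bullet> a \<noteq> 0" using root_system_nonzero[OF assms] by simp
  then have "refl a a = - a" by (simp add: refl_def scaleR_2)
  then show ?thesis using root_system_refl[OF assms assms(2)] by simp
qed

lemma root_system_inner_square_less:
  assumes rs: "root_system \<Phi>" and a: "a \<in> \<Phi>" and r: "r \<in> \<Phi>" and "a \<noteq> r" "a \<noteq> - r"
  shows "(a \<bullet> r) * (a \<bullet> r) < (a \<bullet> a) * (r \<bullet> r)"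
proof (rule ccontr)
  assume "\<not> ?thesis"
  then have ineq: "(a \<bullet> a) * (r \<bullet> r) \<le> (a \<bullet> r) * (a \<bullet> r)" by simp
  have rr: "r \<bullet> r > 0" using root_system_nonzero[OF rs r] by simp
  define c where "c = (a \<bullet> r) / (r \<bullet> r)"
  have "(a - c *\<^sub>R r) \<bullet> (a - c *\<^sub>R r) = a \<bullet> a - (a \<bullet> r) * (a \<bullet> r) / (r \<bullet> r)"
    using rr unfolding c_def by (simp add: inner_diff_left inner_diff_right inner_commute field_simps)
  also have "\<dots> \<le> 0" using ineq rr by (simp add: field_simps)
  finally have "a = c *\<^sub>R r" by (metis inner_gt_zero_iff not_le eq_iff_diff_eq_0)
  moreover have "c = 1 \<or> c = -1" using rs a r \<open>a = c *\<^sub>R r\<close> by (auto simp: root_system_def)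
  ultimately show False using assms(4,5) by auto
qed

lemma root_system_add_obtuse:
  assumes rs: "root_system \<Phi>" and a: "a \<in> \<Phi>" and r: "r \<in> \<Phi>"
    and obtuse: "a \<bullet> r < 0" and "r \<noteq> - a"
  shows "a + r \<in> \<Phi>"
proof -
  have aa: "a \<bullet> a > 0" and rr: "r \<bullet> r > 0"
    using root_system_nonzero[OF rs a] root_system_nonzero[OF rs r] by auto
  obtain k1 where k1: "2 * (a \<bullet> r) / (r \<bullet> r) = of_int k1"
    using root_system_cartan_integer[OF rs r a] by (auto elim: Ints_cases)
  obtain k2 where k2: "2 * (r \<bullet> a) / (a \<bullet> a) = of_int k2"
    using root_system_cartan_integer[OF rs a r] by (auto elim: Ints_cases)
  have "real_of_int k1 < 0" "real_of_int k2 < 0"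
    unfolding k1[symmetric] k2[symmetric] using obtuse aa rr by (simp_all add: divide_neg_pos inner_commute)
  then have "k1 < 0" "k2 < 0" by simp_all
  have "a \<noteq> r" using obtuse by (metis inner_ge_zero not_le)
  then have "(a \<bullet> r) * (a \<bullet> r) < (a \<bullet> a) * (r \<bullet> r)"
    using root_system_inner_square_less[OF rs a r] assms(5) by (metis minus_minus)
  then have "real_of_int k1 * real_of_int k2 < 4"
    using aa rr unfolding k1[symmetric] k2[symmetric] by (simp add: field_simps inner_commute)
  then have "k1 * k2 < 4" by (simp flip: of_int_mult)
  then consider "k1 = -1" | "k2 = -1"
    using \<open>k1 < 0\<close> \<open>k2 < 0\<close> mult_mono[of 2 "-k1" 2 "-k2"] by fastforce
  then show ?thesis
  proof cases
    case 1
    then have "refl r a = a + r" using k1 by (simp add: refl_def)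
    then show ?thesis using root_system_refl[OF rs r a] by simp
  next
    case 2
    then have "refl a r = a + r" using k2 by (simp add: refl_def)
    then show ?thesis using root_system_refl[OF rs a r] by simp
  qed
qed

lemma irreducible_rs_common_nonorthogonal:
  assumes irr: "irreducible_rs \<Phi>" and rs: "root_system \<Phi>" and a: "a \<in> \<Phi>" and b: "b \<in> \<Phi>"
  shows "\<exists>r\<in>\<Phi>. r \<bullet> a \<noteq> 0 \<and> r \<bullet> b \<noteq> 0"
proof -
  define C where "C = {x\<in>\<Phi>. \<exists>r\<in>\<Phi>. r \<bullet> a \<noteq> 0 \<and> r \<bullet> x \<noteq> 0}"
  have closed: "y \<in> C" if x: "x \<in> C" and y: "y \<in> \<Phi>" and xy: "x \<bullet> y \<noteq> 0" for x y
  proof -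
    obtain r where r: "r \<in> \<Phi>" "r \<bullet> a \<noteq> 0" "r \<bullet> x \<noteq> 0" and xP: "x \<in> \<Phi>"
      using x by (auto simp: C_def)
    consider "r \<bullet> y \<noteq> 0" | "a \<bullet> y \<noteq> 0" | "x \<bullet> a \<noteq> 0" | "r \<bullet> y = 0" "a \<bullet> y = 0" "x \<bullet> a = 0"
      by blast
    then show ?thesis
    proof cases
      case 1
      then show ?thesis using r y by (auto simp: C_def)
    next
      case 2
      then show ?thesis using a y root_system_nonzero[OF rs a] by (auto simp: C_def intro!: bexI[of _ a])
    next
      case 3
      then show ?thesis using xP y xy by (auto simp: C_def inner_commute intro!: bexI[of _ x])
    next
      case 4
      \<comment> \<open>Then \<open>s\<^sub>r x = x - k r\<close> with \<open>k \<noteq> 0\<close> is a root non-orthogonal to both \<open>a\<close> and \<open>y\<close>.\<close>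
      define k where "k = 2 * (x \<bullet> r) / (r \<bullet> r)"
      have "r \<bullet> r \<noteq> 0" using root_system_nonzero[OF rs r(1)] by simp
      then have "k \<noteq> 0" unfolding k_def using r(3) by (simp add: inner_commute)
      have t: "refl r x = x - k *\<^sub>R r" by (simp add: refl_def k_def)
      have "refl r x \<bullet> a \<noteq> 0" using t 4 \<open>k \<noteq> 0\<close> r(2) by (simp add: inner_diff_left)
      moreover have "refl r x \<bullet> y \<noteq> 0" using t 4 xy by (simp add: inner_diff_left)
      ultimately show ?thesis using y root_system_refl[OF rs r(1) xP] by (auto simp: C_def)
    qed
  qed
  have "a \<in> C" using a root_system_nonzero[OF rs a] by (auto simp: C_def intro!: bexI[of _ a])
  moreover have "C \<union> (\<Phi> - C) = \<Phi> \<and> C \<inter> (\<Phi> - C) = {} \<and> (\<forall>x\<in>C. \<forall>y\<in>\<Phi> - C. x \<bullet> y = 0)"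
    using closed by (auto simp: C_def)
  ultimately have "b \<in> C" using irr b unfolding irreducible_rs_def by blast
  then show ?thesis by (auto simp: C_def)
qed

lemma irreducible_rs_obtuse_root:
  assumes irr: "irreducible_rs \<Phi>" and rs: "root_system \<Phi>" and a: "a \<in> \<Phi>" and b: "b \<in> \<Phi>"
    and ab: "a \<bullet> b = 0"
  shows "\<exists>r\<in>\<Phi>. r \<bullet> a < 0 \<and> r \<bullet> b < 0"
proof -
  obtain r where r: "r \<in> \<Phi>" "r \<bullet> a \<noteq> 0" "r \<bullet> b \<noteq> 0"
    using irreducible_rs_common_nonorthogonal[OF irr rs a b] by blast
  \<comment> \<open>Replace \<open>r\<close> by \<open>-r\<close>, then by \<open>s\<^sub>b r\<close>, to fix the two signs independently.\<close>
  obtain r1 where r1: "r1 \<in> \<Phi>" "r1 \<bullet> a < 0" "r1 \<bullet> b \<noteq> 0"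
    using r root_system_uminus[OF rs r(1)] by (cases "r \<bullet> a < 0") (auto intro: bexI[of _ "- r"])
  show ?thesis
  proof (cases "r1 \<bullet> b < 0")
    case False
    have "b \<bullet> b \<noteq> 0" using root_system_nonzero[OF rs b] by simp
    then have "refl b r1 \<bullet> a = r1 \<bullet> a" "refl b r1 \<bullet> b = - (r1 \<bullet> b)"
      using ab by (simp_all add: refl_def inner_diff_left inner_commute[of b a])
    then show ?thesis using r1 False root_system_refl[OF rs b r1(1)] by (auto intro!: bexI[of _ "refl b r1"])
  qed (use r1 in blast)
qed

section \<open>Simple roots and fundamental coweights\<close>

lemma orth_eq_hyperplane: "orth v = {x. v \<bullet> x = 0}"
  by (auto simp: orth_def inner_commute)

lemma subspace_orth: "subspace (orth v)"
  unfolding orth_eq_hyperplane by (rule subspace_hyperplane)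

lemma dim_orth: "v \<noteq> 0 \<Longrightarrow> dim (orth v) = DIM('a) - 1" for v :: "'a::euclidean_space"
  unfolding orth_eq_hyperplane by (rule dim_hyperplane)

lemma orthogonal_spanning_eq_0:
  fixes x :: "'a::euclidean_space"
  assumes "span S = UNIV" "\<forall>s\<in>S. s \<bullet> x = 0"
  shows "x = 0"
proof -
  have "span S \<subseteq> orth x"
    using assms(2) by (intro span_minimal subspace_orth) (auto simp: orth_def)
  then have "x \<in> orth x" using assms(1) by blast
  then show ?thesis by (simp add: orth_def)
qed

lemma is_base_span:
  assumes rs: "root_system \<Phi>" and b: "is_base \<Phi> \<alpha> n"
  shows "span (\<alpha> ` {1..n}) = UNIV"
proof -
  have "\<Phi> \<subseteq> span (\<alpha> ` {1..n})"
  proof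
    fix x assume "x \<in> \<Phi>"
    then obtain c :: "nat \<Rightarrow> int" where "x = (\<Sum>i=1..n. of_int (c i) *\<^sub>R \<alpha> i)"
      using b by (auto simp: is_base_def)
    then show "x \<in> span (\<alpha> ` {1..n})"
      by (simp only:) (intro span_sum span_scale span_base imageI, simp)
  qed
  then have "span \<Phi> \<subseteq> span (\<alpha> ` {1..n})" by (simp add: span_minimal)
  then show ?thesis using rs by (auto simp: root_system_def)
qed

lemma is_base_dim_span:
  assumes "is_base \<Phi> \<alpha> n" "J \<subseteq> {1..n}"
  shows "dim (span (\<alpha> ` J)) = card J"
proof -
  have "independent (\<alpha> ` J)" "card (\<alpha> ` J) = card J"
    using assms independent_mono[of "\<alpha> ` {1..n}" "\<alpha> ` J"]
    by (auto simp: is_base_def intro!: card_image intro: inj_on_subset)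
  then show ?thesis by (metis dim_span_eq_card_independent)
qed

lemma coweight_inner:
  fixes \<alpha> :: "nat \<Rightarrow> 'a::euclidean_space"
  assumes rs: "root_system \<Phi>" and b: "is_base \<Phi> \<alpha> DIM('a)" and k: "k \<in> {1..DIM('a)}"
  shows "\<forall>j\<in>{1..DIM('a)}. \<alpha> j \<bullet> coweight \<alpha> DIM('a) k = (if j = k then 1 else 0)"
proof -
  let ?n = "DIM('a)" and ?J = "{1..DIM('a)} - {k}"
  have sp: "span (\<alpha> ` {1..?n}) = UNIV" using is_base_span[OF rs b] .
  have "dim (\<alpha> ` ?J) < ?n" using is_base_dim_span[OF b, of ?J] k by (simp add: dim_span)
  then obtain z :: 'a where z: "z \<noteq> 0" "\<And>y. y \<in> span (\<alpha> ` ?J) \<Longrightarrow> orthogonal z y"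
    using orthogonal_to_subspace_exists by blast
  have zj: "\<alpha> j \<bullet> z = 0" if "j \<in> ?J" for j
    using z(2)[of "\<alpha> j"] that span_base[of "\<alpha> j" "\<alpha> ` ?J"] by (auto simp: orthogonal_def inner_commute)
  have zk: "\<alpha> k \<bullet> z \<noteq> 0"
  proof
    assume "\<alpha> k \<bullet> z = 0"
    then have "\<forall>s\<in>\<alpha> ` {1..?n}. s \<bullet> z = 0" using zj by blast
    then show False using orthogonal_spanning_eq_0[OF sp] z(1) by blast
  qed
  define v where "v = (1 / (\<alpha> k \<bullet> z)) *\<^sub>R z"
  have v: "\<forall>j\<in>{1..?n}. \<alpha> j \<bullet> v = (if j = k then 1 else 0)"
    using zj zk by (auto simp: v_def)
  have "u = v" if u: "\<forall>j\<in>{1..?n}. \<alpha> j \<bullet> u = (if j = k then 1 else 0)" for u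
  proof -
    have "\<forall>s\<in>\<alpha> ` {1..?n}. s \<bullet> (u - v) = 0" using u v by (auto simp: inner_diff_right)
    then show ?thesis using orthogonal_spanning_eq_0[OF sp] by fastforce
  qed
  then have "\<exists>!v. \<forall>j\<in>{1..?n}. \<alpha> j \<bullet> v = (if j = k then 1 else 0)" using v by blast
  then show ?thesis unfolding coweight_def by (rule theI')
qed

lemma coweight_nonzero:
  fixes \<alpha> :: "nat \<Rightarrow> 'a::euclidean_space"
  assumes "root_system \<Phi>" "is_base \<Phi> \<alpha> DIM('a)" "k \<in> {1..DIM('a)}"
  shows "coweight \<alpha> DIM('a) k \<noteq> 0"
  using coweight_inner[OF assms] assms(3) by force

lemma span_simple_roots_remove_eq_orth_coweight:
  fixes \<alpha> :: "nat \<Rightarrow> 'a::euclidean_space"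
  assumes rs: "root_system \<Phi>" and b: "is_base \<Phi> \<alpha> DIM('a)" and h: "h \<in> {1..DIM('a)}"
  shows "span (\<alpha> ` ({1..DIM('a)} - {h})) = orth (coweight \<alpha> DIM('a) h)"
proof (rule subspace_dim_equal)
  show "span (\<alpha> ` ({1..DIM('a)} - {h})) \<subseteq> orth (coweight \<alpha> DIM('a) h)"
    using coweight_inner[OF assms] by (intro span_minimal subspace_orth) (auto simp: orth_def)
  show "dim (orth (coweight \<alpha> DIM('a) h)) \<le> dim (span (\<alpha> ` ({1..DIM('a)} - {h})))"
    using is_base_dim_span[OF b, of "{1..DIM('a)} - {h}"] h dim_orth[OF coweight_nonzero[OF assms]]
    by simp
qed (simp_all add: subspace_orth)

section \<open>Faces of the root polytope\<close>

lemma span_eq_orth_if_dim: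
  fixes S :: "'a::euclidean_space set"
  assumes "dim S = DIM('a) - 1"
  shows "\<exists>v. v \<noteq> 0 \<and> span S = orth v"
proof -
  have "dim S < DIM('a)" using assms DIM_positive[where 'a='a] by linarith
  then obtain v :: 'a where v: "v \<noteq> 0" "\<And>y. y \<in> span S \<Longrightarrow> orthogonal v y"
    using orthogonal_to_subspace_exists by blast
  have "span S = orth v"
  proof (rule subspace_dim_equal)
    show "span S \<subseteq> orth v" using v(2) by (auto simp: orth_def orthogonal_def inner_commute)
    show "dim (orth v) \<le> dim (span S)" using dim_orth[OF v(1)] assms by (simp add: dim_span)
  qed (simp_all add: subspace_orth)
  then show ?thesis using v by blast
qed

lemma dim_eq_aff_dim_plus_one:
  fixes S :: "'a::euclidean_space set"
  assumes "0 \<notin> affine hull S"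
  shows "int (dim S) = aff_dim S + 1"
proof -
  have "aff_dim (insert 0 S) = aff_dim S + 1" using assms by (simp add: aff_dim_insert)
  moreover have "aff_dim (insert 0 S) = int (dim (insert 0 S))" by (simp add: aff_dim_zero hull_inc)
  moreover have "dim (insert 0 S) = dim S" by (simp add: dim_insert span_zero)
  ultimately show ?thesis by simp
qed

lemma span_convex_hull: "span (convex hull S) = span S"
proof (subst span_eq, intro conjI)
  show "convex hull S \<subseteq> span S" by (rule hull_minimal[OF span_superset]) (simp add: subspace_imp_convex)
  show "S \<subseteq> span (convex hull S)" using hull_subset span_superset by (rule order_trans)
qed

lemma face_of_convex_hull_roots_span:
  assumes rs: "root_system \<Phi>" and F: "F face_of convex hull \<Phi>"
  obtains T where "T \<subseteq> \<Phi>" "T \<subseteq> F" "span T = span F"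
proof -
  have "compact \<Phi>" using rs by (simp add: root_system_def finite_imp_compact)
  then obtain T where "T \<subseteq> \<Phi>" "F = convex hull T" using face_of_convex_hull_subset[OF _ F] by blast
  then show ?thesis using that hull_subset[of T] by (simp add: span_convex_hull)
qed

lemma root_system_affine_hull_eq_UNIV:
  assumes rs: "root_system \<Phi>"
  shows "affine hull \<Phi> = UNIV"
proof -
  have "\<Phi> \<noteq> {}"
  proof
    assume "\<Phi> = {}"
    then have "span \<Phi> = {0}" by simp
    then show False using rs nonempty_Basis by (auto simp: root_system_def)
  qed
  then obtain x where x: "x \<in> \<Phi>" by blast
  have "(1/2) *\<^sub>R x + (1/2) *\<^sub>R (- x) \<in> affine hull \<Phi>"
    by (rule mem_affine[OF affine_affine_hull]) (use x root_system_uminus[OF rs x] hull_inc in auto)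
  then have "0 \<in> affine hull \<Phi>" by simp
  then have "affine hull \<Phi> = span \<Phi>" by (rule affine_hull_span_0)
  then show ?thesis using rs by (simp add: root_system_def)
qed

lemma zero_notin_affine_hull_proper_face:
  assumes rs: "root_system \<Phi>" and F: "F face_of convex hull \<Phi>" and proper: "F \<noteq> convex hull \<Phi>"
  shows "0 \<notin> affine hull F"
proof (cases "F = {}")
  case False
  have "polyhedron (convex hull \<Phi>)" using rs
    by (intro polytope_imp_polyhedron) (auto simp: polytope_def root_system_def)
  then have "F exposed_face_of convex hull \<Phi>" using exposed_face_of_polyhedron F by blast
  then obtain a b where ab: "convex hull \<Phi> \<subseteq> {x. a \<bullet> x \<le> b}" "F = convex hull \<Phi> \<inter> {x. a \<bullet> x = b}"
    using False unfolding exposed_face_of_def by blast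
  \<comment> \<open>The supporting hyperplane misses \<open>0\<close>: if \<open>b = 0\<close>, the symmetry \<open>\<Phi> = -\<Phi>\<close> puts \<open>\<Phi>\<close> inside it.\<close>
  have "b \<noteq> 0"
  proof
    assume "b = 0"
    have "a \<bullet> x = 0" if x: "x \<in> \<Phi>" for x
    proof -
      have "a \<bullet> x \<le> 0" "a \<bullet> (- x) \<le> 0"
        using ab(1) \<open>b = 0\<close> x root_system_uminus[OF rs x] hull_inc[of _ \<Phi>] by force+
      then show ?thesis by simp
    qed
    then have "convex hull \<Phi> \<subseteq> {x. a \<bullet> x = 0}" by (intro hull_minimal) (auto simp: convex_hyperplane)
    then show False using ab(2) \<open>b = 0\<close> proper by auto
  qed
  moreover have "affine hull F \<subseteq> {x. a \<bullet> x = b}"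
    using ab(2) by (intro hull_minimal) (auto simp: affine_hyperplane)
  ultimately show ?thesis by auto
qed simp

lemma face_span_eq_orth:
  fixes \<Phi> :: "'a::euclidean_space set"
  assumes rs: "root_system \<Phi>" and F: "F face_of convex hull \<Phi>" and ad: "aff_dim F = int DIM('a) - 2"
  shows "\<exists>v. v \<noteq> 0 \<and> span F = orth v"
proof -
  have "aff_dim (convex hull \<Phi>) = aff_dim (affine hull \<Phi>)" by (simp add: aff_dim_convex_hull)
  also have "\<dots> = int DIM('a)" by (simp add: root_system_affine_hull_eq_UNIV[OF rs])
  finally have "aff_dim (convex hull \<Phi>) = int DIM('a)" .
  then have "F \<noteq> convex hull \<Phi>" using ad by auto
  then have "int (dim F) = aff_dim F + 1"
    using zero_notin_affine_hull_proper_face[OF rs F] dim_eq_aff_dim_plus_one by blast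
  then have "dim F = DIM('a) - 1" using ad by linarith
  then show ?thesis by (rule span_eq_orth_if_dim)
qed

section \<open>Conjugating face hyperplanes to coweight hyperplanes\<close>

lemma weyl_orbit_finite:
  assumes rs: "root_system \<Phi>"
  shows "finite ((\<lambda>w. w v) ` weyl \<Phi>)"
proof -
  have finP: "finite \<Phi>" using rs by (simp add: root_system_def)
  have "v \<in> span \<Phi>" using rs by (simp add: root_system_def)
  then obtain c where vc: "v = (\<Sum>x\<in>\<Phi>. c x *\<^sub>R x)" using span_finite[OF finP] by auto
  \<comment> \<open>\<open>w v\<close> is determined by the restriction of \<open>w\<close> to the finite set \<open>\<Phi>\<close>.\<close>
  have "(\<lambda>w. w v) ` weyl \<Phi> \<subseteq> (\<lambda>g. \<Sum>x\<in>\<Phi>. c x *\<^sub>R g x) ` (\<Phi> \<rightarrow>\<^sub>E \<Phi>)"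
  proof
    fix y assume "y \<in> (\<lambda>w. w v) ` weyl \<Phi>"
    then obtain w where w: "w \<in> weyl \<Phi>" "y = w v" by blast
    have "w v = (\<Sum>x\<in>\<Phi>. c x *\<^sub>R w x)"
      unfolding vc by (simp add: linear_sum[OF weyl_linear[OF w(1)]] linear_scale[OF weyl_linear[OF w(1)]])
    also have "\<dots> = (\<Sum>x\<in>\<Phi>. c x *\<^sub>R restrict w \<Phi> x)" by (rule sum.cong) auto
    finally have "y = (\<Sum>x\<in>\<Phi>. c x *\<^sub>R restrict w \<Phi> x)" using w(2) by simp
    moreover have "restrict w \<Phi> \<in> \<Phi> \<rightarrow>\<^sub>E \<Phi>" using weyl_root[OF rs w(1)] by auto
    ultimately show "y \<in> (\<lambda>g. \<Sum>x\<in>\<Phi>. c x *\<^sub>R g x) ` (\<Phi> \<rightarrow>\<^sub>E \<Phi>)" by (rule image_eqI)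
  qed
  moreover have "finite ((\<lambda>g. \<Sum>x\<in>\<Phi>. c x *\<^sub>R g x) ` (\<Phi> \<rightarrow>\<^sub>E \<Phi>))"
    using finP by (simp add: finite_PiE)
  ultimately show ?thesis by (rule finite_subset)
qed

lemma exists_weyl_dominant:
  fixes \<alpha> :: "nat \<Rightarrow> 'a::euclidean_space"
  assumes rs: "root_system \<Phi>" and b: "is_base \<Phi> \<alpha> DIM('a)"
  shows "\<exists>w\<in>weyl \<Phi>. \<forall>i\<in>{1..DIM('a)}. \<alpha> i \<bullet> w v \<ge> 0"
proof -
  \<comment> \<open>Maximise the height \<open>(w v, \<rho>)\<close> over the orbit, \<open>\<rho>\<close> being the sum of the fundamental coweights;
    a simple reflection would increase it at any simple root where \<open>w v\<close> is negative.\<close>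
  define \<rho> where "\<rho> = (\<Sum>k\<in>{1..DIM('a)}. coweight \<alpha> DIM('a) k)"
  have \<alpha>\<rho>: "\<alpha> i \<bullet> \<rho> = 1" if i: "i \<in> {1..DIM('a)}" for i
  proof -
    have "\<alpha> i \<bullet> \<rho> = (\<Sum>k\<in>{1..DIM('a)}. if i = k then 1 else 0)"
      unfolding \<rho>_def inner_sum_right using coweight_inner[OF rs b] i by (intro sum.cong) auto
    then show ?thesis using i by simp
  qed
  let ?heights = "(\<lambda>w. w v \<bullet> \<rho>) ` weyl \<Phi>"
  have fin: "finite ?heights"
    using finite_imageI[OF weyl_orbit_finite[OF rs, of v], of "\<lambda>y. y \<bullet> \<rho>"] by (simp add: image_image)
  moreover have "?heights \<noteq> {}" using weyl.weyl_id by blast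
  ultimately have "Max ?heights \<in> ?heights" by (rule Max_in)
  then obtain w0 where w0: "w0 \<in> weyl \<Phi>" "w0 v \<bullet> \<rho> = Max ?heights" by auto
  have max: "w v \<bullet> \<rho> \<le> w0 v \<bullet> \<rho>" if "w \<in> weyl \<Phi>" for w
    unfolding w0(2) using fin that by (intro Max_ge) auto
  have "\<alpha> i \<bullet> w0 v \<ge> 0" if i: "i \<in> {1..DIM('a)}" for i
  proof (rule ccontr)
    assume neg: "\<not> \<alpha> i \<bullet> w0 v \<ge> 0"
    have ai: "\<alpha> i \<in> \<Phi>" using b i by (auto simp: is_base_def)
    have "\<alpha> i \<bullet> \<alpha> i > 0" using root_system_nonzero[OF rs ai] by simp
    have "(refl (\<alpha> i) \<circ> w0) v \<bullet> \<rho> = w0 v \<bullet> \<rho> - 2 * (w0 v \<bullet> \<alpha> i) / (\<alpha> i \<bullet> \<alpha> i)"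
      using \<alpha>\<rho>[OF i] by (simp add: refl_def inner_diff_left)
    also have "\<dots> > w0 v \<bullet> \<rho>"
      using neg \<open>\<alpha> i \<bullet> \<alpha> i > 0\<close> by (simp add: inner_commute divide_neg_pos)
    finally show False using max[OF weyl.weyl_step[OF ai w0(1)]] by simp
  qed
  then show ?thesis using w0(1) by blast
qed

lemma root_orthogonal_dominant_in_span:
  assumes b: "is_base \<Phi> \<alpha> n" and dom: "\<forall>i\<in>{1..n}. \<alpha> i \<bullet> u \<ge> 0"
    and \<beta>: "\<beta> \<in> \<Phi>" "\<beta> \<bullet> u = 0"
  shows "\<beta> \<in> span (\<alpha> ` {i\<in>{1..n}. \<alpha> i \<bullet> u = 0})"
proof -
  obtain c :: "nat \<Rightarrow> int" where c: "\<beta> = (\<Sum>i=1..n. of_int (c i) *\<^sub>R \<alpha> i)"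
    and sign: "(\<forall>i\<in>{1..n}. c i \<ge> 0) \<or> (\<forall>i\<in>{1..n}. c i \<le> 0)"
    using b \<beta>(1) by (auto simp: is_base_def)
  define t where "t i = of_int (c i) * (\<alpha> i \<bullet> u)" for i
  have sum_t: "(\<Sum>i=1..n. t i) = 0" using \<beta>(2) unfolding c t_def by (simp add: inner_sum_left)
  \<comment> \<open>All terms of \<open>(\<beta>, u) = \<Sum> c\<^sub>i (\<alpha>\<^sub>i, u)\<close> have the same sign, so each vanishes.\<close>
  have "t i = 0" if i: "i \<in> {1..n}" for i
    using sign
  proof
    assume "\<forall>i\<in>{1..n}. c i \<ge> 0"
    then have "\<forall>i\<in>{1..n}. t i \<ge> 0" using dom by (simp add: t_def)
    then show ?thesis using sum_t i sum_nonneg_eq_0_iff[of "{1..n}" t] by simp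
  next
    assume "\<forall>i\<in>{1..n}. c i \<le> 0"
    then have "\<forall>i\<in>{1..n}. - t i \<ge> 0" using dom by (simp add: t_def mult_nonpos_nonneg)
    moreover have "(\<Sum>i=1..n. - t i) = 0" using sum_t by (simp add: sum_negf)
    ultimately show ?thesis using i sum_nonneg_eq_0_iff[of "{1..n}" "\<lambda>i. - t i"] by simp
  qed
  then have "of_int (c i) *\<^sub>R \<alpha> i \<in> span (\<alpha> ` {i\<in>{1..n}. \<alpha> i \<bullet> u = 0})" if i: "i \<in> {1..n}" for i
  proof (cases "\<alpha> i \<bullet> u = 0")
    case True
    then show ?thesis using i by (intro span_scale span_base) auto
  next
    case False
    then show ?thesis using i \<open>\<And>i. i \<in> {1..n} \<Longrightarrow> t i = 0\<close>[OF i] by (simp add: t_def span_zero)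
  qed
  then show ?thesis unfolding c by (intro span_sum)
qed

lemma dominant_orth_eq_orth_coweight:
  fixes \<alpha> :: "nat \<Rightarrow> 'a::euclidean_space"
  assumes rs: "root_system \<Phi>" and b: "is_base \<Phi> \<alpha> DIM('a)"
    and dom: "\<forall>i\<in>{1..DIM('a)}. \<alpha> i \<bullet> u \<ge> 0" and "u \<noteq> 0"
    and spanned: "orth u \<subseteq> span (\<Phi> \<inter> orth u)"
  shows "\<exists>k\<in>{1..DIM('a)}. orth u = orth (coweight \<alpha> DIM('a) k)"
proof -
  define Z where "Z = {i\<in>{1..DIM('a)}. \<alpha> i \<bullet> u = 0}"
  have "\<Phi> \<inter> orth u \<subseteq> span (\<alpha> ` Z)"
    using root_orthogonal_dominant_in_span[OF b dom] by (auto simp: Z_def orth_def)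
  then have "span (\<Phi> \<inter> orth u) \<subseteq> span (\<alpha> ` Z)" by (rule span_minimal) simp
  then have "dim (orth u) \<le> dim (span (\<alpha> ` Z))" using spanned by (intro dim_subset) blast
  moreover have Zsub: "Z \<subseteq> {1..DIM('a)}" by (auto simp: Z_def)
  ultimately have "DIM('a) - 1 \<le> card Z"
    using is_base_dim_span[OF b] dim_orth[OF \<open>u \<noteq> 0\<close>] by simp
  have "Z \<noteq> {1..DIM('a)}"
  proof
    assume "Z = {1..DIM('a)}"
    then have "\<forall>s\<in>\<alpha> ` {1..DIM('a)}. s \<bullet> u = 0" by (auto simp: Z_def)
    then show False using orthogonal_spanning_eq_0[OF is_base_span[OF rs b]] \<open>u \<noteq> 0\<close> by blast
  qed
  then obtain k where k: "k \<in> {1..DIM('a)}" "k \<notin> Z" using Zsub by blast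
  have "Z \<subseteq> {1..DIM('a)} - {k}" using k by (auto simp: Z_def)
  moreover have "card ({1..DIM('a)} - {k}) \<le> card Z" using k \<open>DIM('a) - 1 \<le> card Z\<close> by simp
  ultimately have "Z = {1..DIM('a)} - {k}" by (intro card_seteq) simp_all
  moreover have "span (\<alpha> ` Z) \<subseteq> orth u"
    by (rule span_minimal[OF _ subspace_orth]) (auto simp: Z_def orth_def)
  ultimately have "orth (coweight \<alpha> DIM('a) k) \<subseteq> orth u"
    using span_simple_roots_remove_eq_orth_coweight[OF rs b k(1)] by simp
  then have "orth (coweight \<alpha> DIM('a) k) = orth u"
    by (rule subspace_dim_equal[OF subspace_orth subspace_orth])
       (simp add: dim_orth[OF \<open>u \<noteq> 0\<close>] dim_orth[OF coweight_nonzero[OF rs b k(1)]])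
  then show ?thesis using k(1) by auto
qed

lemma weyl_conj_orth_coweight:
  fixes \<alpha> :: "nat \<Rightarrow> 'a::euclidean_space"
  assumes rs: "root_system \<Phi>" and b: "is_base \<Phi> \<alpha> DIM('a)"
    and "v \<noteq> 0" and spanned: "orth v \<subseteq> span (\<Phi> \<inter> orth v)"
  shows "\<exists>w\<in>weyl \<Phi>. \<exists>k\<in>{1..DIM('a)}. w ` orth v = orth (coweight \<alpha> DIM('a) k)"
proof -
  obtain w where w: "w \<in> weyl \<Phi>" and dom: "\<forall>i\<in>{1..DIM('a)}. \<alpha> i \<bullet> w v \<ge> 0"
    using exists_weyl_dominant[OF rs b] by blast
  have "w v \<noteq> 0" using \<open>v \<noteq> 0\<close> weyl_inner[OF w, of v v] by auto
  have "orth (w v) = w ` orth v" using weyl_image_orth[OF w] by simp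
  also have "\<dots> \<subseteq> w ` span (\<Phi> \<inter> orth v)" using spanned by (rule image_mono)
  also have "\<dots> = span (w ` (\<Phi> \<inter> orth v))" by (rule span_linear_image[OF weyl_linear[OF w], symmetric])
  also have "\<dots> \<subseteq> span (\<Phi> \<inter> orth (w v))"
    using weyl_root[OF rs w] weyl_image_orth[OF w] by (intro span_mono) auto
  finally obtain k where "k \<in> {1..DIM('a)}" "orth (w v) = orth (coweight \<alpha> DIM('a) k)"
    using dominant_orth_eq_orth_coweight[OF rs b dom \<open>w v \<noteq> 0\<close>] by blast
  then show ?thesis using w weyl_image_orth[OF w, of v] by blast
qed

lemma face_hyperplane_eq_weyl_orth_coweight:
  fixes \<alpha> :: "nat \<Rightarrow> 'a::euclidean_space"
  assumes rs: "root_system \<Phi>" and b: "is_base \<Phi> \<alpha> DIM('a)" and S: "S \<in> face_hyperplanes \<Phi>"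
  shows "\<exists>w\<in>weyl \<Phi>. \<exists>k\<in>{1..DIM('a)}.
           S = orth (w (coweight \<alpha> DIM('a) k)) \<and> orth (coweight \<alpha> DIM('a) k) \<in> face_hyperplanes \<Phi>"
proof -
  obtain F where F: "F face_of convex hull \<Phi>" "aff_dim F = int DIM('a) - 2" "S = span F"
    using S by (auto simp: face_hyperplanes_def)
  obtain v where v: "v \<noteq> 0" "S = orth v" using face_span_eq_orth[OF rs F(1,2)] F(3) by blast
  obtain T where T: "T \<subseteq> \<Phi>" "T \<subseteq> F" "span T = span F"
    using face_of_convex_hull_roots_span[OF rs F(1)] by blast
  have "T \<subseteq> \<Phi> \<inter> orth v" using T F(3) v(2) span_superset[of F] by auto
  then have "orth v \<subseteq> span (\<Phi> \<inter> orth v)" using T(3) F(3) v(2) span_mono by blast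
  then obtain w k where wk: "w \<in> weyl \<Phi>" "k \<in> {1..DIM('a)}" "w ` S = orth (coweight \<alpha> DIM('a) k)"
    using weyl_conj_orth_coweight[OF rs b v(1)] v(2) by blast
  have "orth (coweight \<alpha> DIM('a) k) \<in> face_hyperplanes \<Phi>"
    using weyl_image_face_hyperplane[OF rs wk(1) S] wk(3) by simp
  moreover obtain w' where w': "w' \<in> weyl \<Phi>" "\<forall>x. w' (w x) = x" using weyl_inverse[OF wk(1)] by blast
  moreover have "S = orth (w' (coweight \<alpha> DIM('a) k))"
  proof -
    have "S = w' ` (w ` S)" using w'(2) by (simp add: image_image)
    then show ?thesis using wk(3) weyl_image_orth[OF w'(1)] by simp
  qed
  ultimately show ?thesis using wk(2) by blast
qed

section \<open>Irreducibility of the roots in a face hyperplane\<close>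

lemma orthogonal_partition_meets_spanning:
  fixes A B T :: "'a::real_inner set"
  assumes "T \<subseteq> A \<union> B" "A \<subseteq> span T" "\<forall>a\<in>A. \<forall>b\<in>B. a \<bullet> b = 0" "0 \<notin> A" "A \<noteq> {}"
  shows "T \<inter> A \<noteq> {}"
proof
  assume "T \<inter> A = {}"
  then have "T \<subseteq> B" using assms(1) by blast
  obtain a where a: "a \<in> A" using assms(5) by blast
  have "span B \<subseteq> {x. a \<bullet> x = 0}"
    using assms(3) a by (intro span_minimal subspace_hyperplane) auto
  moreover have "a \<in> span B" using a assms(2) span_mono[OF \<open>T \<subseteq> B\<close>] by blast
  ultimately show False using a assms(4) by auto
qed

lemma face_of_midpoint:
  assumes "F face_of S" "x \<in> S" "y \<in> S" "midpoint x y \<in> F"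
  shows "x \<in> F"
proof (cases "x = y")
  case False
  then have "midpoint x y \<in> open_segment x y" by (simp add: midpoint_in_open_segment)
  then show ?thesis using face_ofD assms by blast
qed (use assms in simp)

lemma obtuse_root_in_face_span:
  assumes rs: "root_system \<Phi>" and F: "F face_of convex hull \<Phi>"
    and a: "a \<in> \<Phi>" "a \<in> F" and b: "b \<in> \<Phi>" "b \<in> F" and ab: "a \<bullet> b = 0"
    and r: "r \<in> \<Phi>" "r \<bullet> a < 0" "r \<bullet> b < 0"
  shows "r \<in> span F"
proof (rule ccontr)
  assume r_out: "r \<notin> span F"
  have span_ab: "a \<in> span F" "b \<in> span F" using a(2) b(2) by (simp_all add: span_base)
  have "r \<noteq> - a" using r_out span_ab by (auto simp: span_neg)
  then have ar: "a + r \<in> \<Phi>" using root_system_add_obtuse[OF rs a(1) r(1)] r(2) by (simp add: inner_commute)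
  have "a + r \<noteq> - b"
  proof
    assume "a + r = - b"
    then have "r = - b - a" by (simp add: algebra_simps)
    then show False using r_out span_ab by (simp add: span_diff span_neg)
  qed
  moreover have "b \<bullet> (a + r) < 0" using ab r(3) by (simp add: inner_add_right inner_commute)
  ultimately have bar: "b + (a + r) \<in> \<Phi>" using root_system_add_obtuse[OF rs b(1) ar] by auto
  \<comment> \<open>\<open>-r\<close> and the root \<open>a + b + r\<close> have the same midpoint as \<open>a\<close> and \<open>b\<close>.\<close>
  have "midpoint a b \<in> F"
    using convexD[OF face_of_imp_convex[OF F], of a b "1/2" "1/2"] a(2) b(2)
    by (simp add: midpoint_def scaleR_right_distrib)
  moreover have "midpoint (- r) (b + (a + r)) = midpoint a b" by (simp add: midpoint_def algebra_simps)
  ultimately have "- r \<in> F"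
    using face_of_midpoint[OF F] hull_inc[OF bar] hull_inc[OF root_system_uminus[OF rs r(1)]] by metis
  then have "- (- r) \<in> span F" by (intro span_neg span_base)
  then show False using r_out by simp
qed

lemma irreducible_rs_roots_in_face_span:
  assumes irr: "irreducible_rs \<Phi>" and rs: "root_system \<Phi>" and F: "F face_of convex hull \<Phi>"
  shows "irreducible_rs (\<Phi> \<inter> span F)"
  unfolding irreducible_rs_def
proof (intro allI impI)
  fix A B assume AB: "A \<union> B = \<Phi> \<inter> span F \<and> A \<inter> B = {} \<and> (\<forall>a\<in>A. \<forall>b\<in>B. a \<bullet> b = 0)"
  show "A = {} \<or> B = {}"
  proof (rule ccontr)
    assume "\<not> (A = {} \<or> B = {})"
    obtain T where T: "T \<subseteq> \<Phi>" "T \<subseteq> F" "span T = span F"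
      using face_of_convex_hull_roots_span[OF rs F] by blast
    have "T \<subseteq> A \<union> B" using AB T span_superset[of F] by auto
    moreover have "A \<subseteq> span T" "B \<subseteq> span T" "0 \<notin> A" "0 \<notin> B"
      using AB T(3) root_system_nonzero[OF rs] by auto
    moreover have "\<forall>b\<in>B. \<forall>a\<in>A. b \<bullet> a = 0" using AB by (metis inner_commute)
    ultimately obtain a b where a: "a \<in> T" "a \<in> A" and b: "b \<in> T" "b \<in> B"
      using orthogonal_partition_meets_spanning[of T A B] orthogonal_partition_meets_spanning[of T B A]
        AB \<open>\<not> (A = {} \<or> B = {})\<close> by blast
    have "a \<bullet> b = 0" using AB a b by blast
    then obtain r where r: "r \<in> \<Phi>" "r \<bullet> a < 0" "r \<bullet> b < 0"
      using irreducible_rs_obtuse_root[OF irr rs] a b T(1) by blast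
    then have "r \<in> A \<union> B"
      using obtuse_root_in_face_span[OF rs F _ _ _ _ \<open>a \<bullet> b = 0\<close>] a b T AB by blast
    then show False
    proof
      assume "r \<in> A"
      then show False using AB b(2) r(3) by (metis inner_commute less_irrefl)
    next
      assume "r \<in> B"
      then show False using AB a(2) r(2) by (metis inner_commute less_irrefl)
    qed
  qed
qed

theorem proposition3p2:
  fixes \<Phi> :: "'a::euclidean_space set" and \<alpha> :: "nat \<Rightarrow> 'a"
  assumes "root_system \<Phi>" and "irreducible_rs \<Phi>" and "is_base \<Phi> \<alpha> DIM('a)"
  shows "\<exists>H \<subseteq> {1..DIM('a)}.
     face_hyperplanes \<Phi> = {orth (w (coweight \<alpha> DIM('a) k)) | w k. w \<in> weyl \<Phi> \<and> k \<in> H}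
     \<and> H \<subseteq> {h \<in> {1..DIM('a)}. irreducible_rs (\<Phi> \<inter> span (\<alpha> ` ({1..DIM('a)} - {h})))}"
proof -
  note rs = assms(1) and irr = assms(2) and b = assms(3)
  define H where "H = {k \<in> {1..DIM('a)}. orth (coweight \<alpha> DIM('a) k) \<in> face_hyperplanes \<Phi>}"
  have "face_hyperplanes \<Phi> \<subseteq> {orth (w (coweight \<alpha> DIM('a) k)) | w k. w \<in> weyl \<Phi> \<and> k \<in> H}"
    using face_hyperplane_eq_weyl_orth_coweight[OF rs b] by (fastforce simp: H_def)
  moreover have "{orth (w (coweight \<alpha> DIM('a) k)) | w k. w \<in> weyl \<Phi> \<and> k \<in> H} \<subseteq> face_hyperplanes \<Phi>"
    using weyl_image_face_hyperplane[OF rs] weyl_image_orth by (fastforce simp: H_def)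
  moreover have "irreducible_rs (\<Phi> \<inter> span (\<alpha> ` ({1..DIM('a)} - {h})))" if h: "h \<in> H" for h
  proof -
    obtain F where "F face_of convex hull \<Phi>" "orth (coweight \<alpha> DIM('a) h) = span F"
      using h by (auto simp: H_def face_hyperplanes_def)
    then show ?thesis
      using irreducible_rs_roots_in_face_span[OF irr rs] span_simple_roots_remove_eq_orth_coweight[OF rs b] h
      by (simp add: H_def)
  qed
  ultimately show ?thesis by (intro exI[of _ H]) (auto simp: H_def)
qed

end
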